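(* Let $\kappa_1\le\kappa_2$ be infinite regular cardinals and suppose a $(\kappa_1,\kappa_2)$-peculiar cut in ${}^\omega\omega$ exists. Then there are a $\sigma$-centered forcing notion $\mathbb Q$ of cardinality $\kappa_1$ and a family of $\kappa_2$ open dense subsets of $\mathbb Q$ such that no directed subset $G\subseteq\mathbb Q$ meets all of them. Consequently $\mathbf{MA}_{\kappa_2}(\sigma\text{-centered})$ fails, and $\mathfrak p\le\kappa_2$.
   Context: For $f,g\in{}^\omega\omega$: $f\le^*g$ iff $f(n)\le g(n)$ for all but finitely many $n$; $f<^*g$ iff $f(n)<g(n)$ for all but finitely many $n$. For infinite regular cardinals $\kappa_1,\kappa_2$, a $(\kappa_1,\kappa_2)$-peculiar cut in ${}^\omega\omega$ is a pair $(\langle f_i:i<\kappa_1\rangle,\langle f^\alpha:\alpha<\kappa_2\rangle)$ of sequences in ${}^\omega\omega$ such that: ($\alpha$) $f_j<^*f_i$ for $i<j<\kappa_1$; ($\beta$) $f^\alpha<^*f^\beta$ for $\alpha<\beta<\kappa_2$; ($\gamma$) $f^\alpha<^*f_i$ for all $i<\kappa_1$, $\alpha<\kappa_2$; ($\delta$) if $f\in{}^\omega\omega$ and $f\le^*f_i$ for all $i<\kappa_1$, then $f\le^*f^\alpha$ for some $\alpha<\kappa_2$; ($\varepsilon$) if $f\in{}^\omega\omega$ and $f^\alpha\le^*f$ for all $\alpha<\kappa_2$, then $f_i\le^*f$ for some $i<\kappa_1$. A forcing notion is $\sigma$-centered if it is a countable union of centered sets (sets any finitely many elements of which have a common upper bound).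 $\mathbf{MA}_\mu(\sigma\text{-centered})$ says: for every $\sigma$-centered forcing and every family of $\mu$ dense sets there is a directed set meeting all of them. $\mathfrak p$ is the least cardinality of a family $\mathcal B$ of infinite subsets of $\omega$ all of whose finite subfamilies have infinite intersection but with no infinite $A\subseteq\omega$ such that $A\setminus B$ is finite for all $B\in\mathcal B$. *)

theory Defs
  imports Main
begin

definition ev_le :: "(nat \<Rightarrow> nat) \<Rightarrow> (nat \<Rightarrow> nat) \<Rightarrow> bool" where
  "ev_le f g \<longleftrightarrow> finite {n. \<not> f n \<le> g n}"

definition ev_less :: "(nat \<Rightarrow> nat) \<Rightarrow> (nat \<Rightarrow> nat) \<Rightarrow> bool" where
  "ev_less f g \<longleftrightarrow> finite {n. \<not> f n < g n}"

definition inf_regular_card :: "'a rel \<Rightarrow> bool" where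
  "inf_regular_card r \<longleftrightarrow> Card_order r \<and> infinite (Field r) \<and> regularCard r"

text \<open>A (kappa1,kappa2)-peculiar cut; the sequences are indexed by the fields of
  the cardinal orders r1, r2, ordered by their strict parts.\<close>
definition peculiar_cut ::
  "'a rel \<Rightarrow> 'b rel \<Rightarrow> ('a \<Rightarrow> nat \<Rightarrow> nat) \<Rightarrow> ('b \<Rightarrow> nat \<Rightarrow> nat) \<Rightarrow> bool" where
  "peculiar_cut r1 r2 fl fu \<longleftrightarrow>
     (\<forall>i\<in>Field r1. \<forall>j\<in>Field r1. (i, j) \<in> r1 \<and> i \<noteq> j \<longrightarrow> ev_less (fl j) (fl i)) \<and>
     (\<forall>\<alpha>\<in>Field r2. \<forall>\<beta>\<in>Field r2. (\<alpha>, \<beta>) \<in> r2 \<and> \<alpha> \<noteq> \<beta> \<longrightarrow> ev_less (fu \<alpha>) (fu \<beta>)) \<and>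
     (\<forall>i\<in>Field r1. \<forall>\<alpha>\<in>Field r2. ev_less (fu \<alpha>) (fl i)) \<and>
     (\<forall>f. (\<forall>i\<in>Field r1. ev_le f (fl i)) \<longrightarrow> (\<exists>\<alpha>\<in>Field r2. ev_le f (fu \<alpha>))) \<and>
     (\<forall>f. (\<forall>\<alpha>\<in>Field r2. ev_le (fu \<alpha>) f) \<longrightarrow> (\<exists>i\<in>Field r1. ev_le (fl i) f))"

text \<open>Forcing notions: a preorder le on Q; le p q means q is stronger than p
  (upper bounds are common extensions).\<close>
definition forcing_notion :: "'q set \<Rightarrow> ('q \<Rightarrow> 'q \<Rightarrow> bool) \<Rightarrow> bool" where
  "forcing_notion Q le \<longleftrightarrow> (\<forall>p\<in>Q. le p p) \<and>
     (\<forall>p\<in>Q. \<forall>q\<in>Q. \<forall>r\<in>Q. le p q \<and> le q r \<longrightarrow> le p r)"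

definition centered :: "'q set \<Rightarrow> ('q \<Rightarrow> 'q \<Rightarrow> bool) \<Rightarrow> 'q set \<Rightarrow> bool" where
  "centered Q le C \<longleftrightarrow> C \<subseteq> Q \<and>
     (\<forall>F. F \<subseteq> C \<and> finite F \<longrightarrow> (\<exists>q\<in>Q. \<forall>p\<in>F. le p q))"

definition sigma_centered :: "'q set \<Rightarrow> ('q \<Rightarrow> 'q \<Rightarrow> bool) \<Rightarrow> bool" where
  "sigma_centered Q le \<longleftrightarrow> forcing_notion Q le \<and>
     (\<exists>C :: nat \<Rightarrow> 'q set. Q = (\<Union>n. C n) \<and> (\<forall>n. centered Q le (C n)))"

definition dense_in :: "'q set \<Rightarrow> ('q \<Rightarrow> 'q \<Rightarrow> bool) \<Rightarrow> 'q set \<Rightarrow> bool" where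
  "dense_in Q le D \<longleftrightarrow> D \<subseteq> Q \<and> (\<forall>p\<in>Q. \<exists>q\<in>D. le p q)"

definition open_dense_in :: "'q set \<Rightarrow> ('q \<Rightarrow> 'q \<Rightarrow> bool) \<Rightarrow> 'q set \<Rightarrow> bool" where
  "open_dense_in Q le D \<longleftrightarrow> dense_in Q le D \<and>
     (\<forall>p\<in>D. \<forall>q\<in>Q. le p q \<longrightarrow> q \<in> D)"

definition directed_in :: "'q set \<Rightarrow> ('q \<Rightarrow> 'q \<Rightarrow> bool) \<Rightarrow> 'q set \<Rightarrow> bool" where
  "directed_in Q le G \<longleftrightarrow> G \<subseteq> Q \<and>
     (\<forall>p\<in>G. \<forall>q\<in>G. \<exists>r\<in>G. le p r \<and> le q r)"

text \<open>MA_mu(sigma-centered), where mu is given by a cardinal order r, restricted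
  to forcing notions whose underlying set lives in the type 'q (HOL cannot quantify
  over all types).\<close>
definition MA_sigma_centered :: "'b rel \<Rightarrow> 'q itself \<Rightarrow> bool" where
  "MA_sigma_centered r (T :: 'q itself) \<longleftrightarrow>
     (\<forall>(Q :: 'q set) le (D :: 'b \<Rightarrow> 'q set).
        sigma_centered Q le \<and> (\<forall>\<alpha>\<in>Field r. dense_in Q le (D \<alpha>)) \<longrightarrow>
        (\<exists>G. directed_in Q le G \<and> (\<forall>\<alpha>\<in>Field r. G \<inter> D \<alpha> \<noteq> {})))"

text \<open>Witness families for the pseudo-intersection number p: infinite subsets of nat
  with the strong finite intersection property and no infinite pseudo-intersection.
  p <= kappa iff such a family of cardinality <= kappa exists.\<close>
definition p_family :: "nat set set \<Rightarrow> bool" where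
  "p_family B \<longleftrightarrow> (\<forall>X\<in>B. infinite X) \<and>
     (\<forall>F. F \<subseteq> B \<and> finite F \<longrightarrow> infinite (\<Inter>F)) \<and>
     \<not> (\<exists>A. infinite A \<and> (\<forall>X\<in>B. finite (A - X)))"

end

(*
  The conditions (s, i) consist of a finite stem s and an index i of the lower half of the
  cut; such a condition promises a generic real extending s that stays below f_i beyond s.
  Since the f_i are linearly ordered by eventual domination, finitely many conditions with
  the same stem have a common extension, so the forcing is sigma-centered, and it has
  kappa_1 conditions. A directed set meeting the kappa_2 dense sets which force the generic
  real g below every f_i and above every f^alpha infinitely often is impossible: g would lie
  below the lower half without being dominated by any f^alpha, contradicting clause (delta).
  For p, the hypographs of the f_i and the strict epigraphs of the f^alpha have the strong
  finite intersection property by (gamma), and the column tops of a pseudo-intersection would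
  again violate (delta).
*)

theory Submission
  imports Defs "HOL-Library.Countable_Set_Type" "HOL-Library.Nat_Bijection" "HOL-Library.Sublist"
begin

unbundle cardinal_syntax

section \<open>Eventual domination\<close>

lemma ev_le_iff_eventually: "ev_le f g \<longleftrightarrow> (\<forall>\<^sub>F n in sequentially. f n \<le> g n)"
  by (simp add: ev_le_def eventually_cofinite flip: cofinite_eq_sequentially)

lemma ev_less_iff_eventually: "ev_less f g \<longleftrightarrow> (\<forall>\<^sub>F n in sequentially. f n < g n)"
  by (simp add: ev_less_def eventually_cofinite flip: cofinite_eq_sequentially)

lemma ev_le_refl: "ev_le f f"
  by (simp add: ev_le_def)

lemma ev_less_imp_ev_le: "ev_less f g \<Longrightarrow> ev_le f g"
  unfolding ev_le_iff_eventually ev_less_iff_eventually by (auto elim: eventually_mono)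

section \<open>Forcing notions\<close>

lemma sigma_centeredI:
  fixes C :: "'c::countable \<Rightarrow> 'q set"
  assumes "forcing_notion Q le" and "Q = (\<Union>x. C x)" and "\<And>x. centered Q le (C x)"
  shows "sigma_centered Q le"
proof -
  have "range (C \<circ> from_nat) = range C"
    by (simp only: image_comp[symmetric] surj_from_nat)
  then have "Q = (\<Union>n. C (from_nat n))"
    using assms(2) by simp
  then show ?thesis
    unfolding sigma_centered_def using assms(1,3) by blast
qed

lemma open_dense_in_Int:
  assumes "forcing_notion Q le" and "open_dense_in Q le D" and "open_dense_in Q le E"
  shows "open_dense_in Q le (D \<inter> E)"
  unfolding open_dense_in_def dense_in_def
proof (intro conjI ballI impI)
  fix p assume "p \<in> Q"
  then obtain q where q: "q \<in> D" "le p q"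
    using assms(2) unfolding open_dense_in_def dense_in_def by blast
  then obtain r where r: "r \<in> E" "le q r"
    using assms(2,3) unfolding open_dense_in_def dense_in_def by blast
  then have "r \<in> D \<inter> E" "le p r"
    using assms q \<open>p \<in> Q\<close> unfolding forcing_notion_def open_dense_in_def dense_in_def by blast+
  then show "\<exists>r\<in>D \<inter> E. le p r" by blast
qed (use assms in \<open>auto simp: open_dense_in_def dense_in_def\<close>)

definition MA_sigma_centered_counterexample ::
  "'q set \<Rightarrow> ('q \<Rightarrow> 'q \<Rightarrow> bool) \<Rightarrow> ('i \<Rightarrow> 'q set) \<Rightarrow> 'i set \<Rightarrow> bool" where
  "MA_sigma_centered_counterexample Q le D I \<longleftrightarrow> sigma_centered Q le \<and>
     (\<forall>\<alpha>\<in>I. open_dense_in Q le (D \<alpha>)) \<and>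
     \<not> (\<exists>G. directed_in Q le G \<and> (\<forall>\<alpha>\<in>I. G \<inter> D \<alpha> \<noteq> {}))"

lemma not_MA_sigma_centered:
  assumes "MA_sigma_centered_counterexample (Q :: 'q set) le D (Field r)"
  shows "\<not> MA_sigma_centered r TYPE('q)"
  using assms unfolding MA_sigma_centered_counterexample_def MA_sigma_centered_def open_dense_in_def
  by blast

lemma MA_sigma_centered_counterexample_reindex:
  assumes "\<rho> ` J = I" and "MA_sigma_centered_counterexample Q le D I"
  shows "MA_sigma_centered_counterexample Q le (D \<circ> \<rho>) J"
  using assms unfolding MA_sigma_centered_counterexample_def by auto

lemma sigma_centered_pullback:
  assumes surj: "d ` Q = P" and sc: "sigma_centered P le"
  shows "sigma_centered Q (\<lambda>p q. le (d p) (d q))"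
proof -
  obtain C :: "nat \<Rightarrow> _" where C: "P = (\<Union>n. C n)" "\<And>n. centered P le (C n)"
    using sc unfolding sigma_centered_def by blast
  have "centered Q (\<lambda>p q. le (d p) (d q)) (Q \<inter> d -` C n)" for n
    unfolding centered_def
  proof (intro conjI allI impI)
    fix F assume "F \<subseteq> Q \<inter> d -` C n \<and> finite F"
    then have "d ` F \<subseteq> C n" "finite (d ` F)"
      by auto
    then obtain q where "q \<in> P" "\<forall>p\<in>d ` F. le p q"
      using C(2)[of n] unfolding centered_def by blast
    moreover obtain q' where "q' \<in> Q" "d q' = q"
      using surj \<open>q \<in> P\<close> by blast
    ultimately show "\<exists>q\<in>Q. \<forall>p\<in>F. le (d p) (d q)"
      by auto
  qed auto
  moreover have "Q = (\<Union>n. Q \<inter> d -` C n)"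
    using surj C(1) by blast
  moreover have "forcing_notion Q (\<lambda>p q. le (d p) (d q))"
  proof -
    have "forcing_notion P le" "\<And>p. p \<in> Q \<Longrightarrow> d p \<in> P"
      using sc surj unfolding sigma_centered_def by auto
    then show ?thesis
      unfolding forcing_notion_def by meson
  qed
  ultimately show ?thesis
    unfolding sigma_centered_def by blast
qed

lemma open_dense_in_pullback:
  assumes "d ` Q = P" and "open_dense_in P le D"
  shows "open_dense_in Q (\<lambda>p q. le (d p) (d q)) (Q \<inter> d -` D)"
  using assms unfolding open_dense_in_def dense_in_def by blast

lemma directed_in_pullback:
  assumes "d ` Q = P" and "directed_in Q (\<lambda>p q. le (d p) (d q)) G"
  shows "directed_in P le (d ` G)"
  using assms unfolding directed_in_def by blast

lemma MA_sigma_centered_counterexample_pullback: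
  assumes surj: "d ` Q = P" and cex: "MA_sigma_centered_counterexample P le D I"
  shows "MA_sigma_centered_counterexample Q (\<lambda>p q. le (d p) (d q)) (\<lambda>\<alpha>. Q \<inter> d -` D \<alpha>) I"
proof -
  have sc: "sigma_centered P le" and od: "\<And>\<alpha>. \<alpha> \<in> I \<Longrightarrow> open_dense_in P le (D \<alpha>)"
    and no_generic: "\<not> (\<exists>G. directed_in P le G \<and> (\<forall>\<alpha>\<in>I. G \<inter> D \<alpha> \<noteq> {}))"
    using cex unfolding MA_sigma_centered_counterexample_def by auto
  have "\<not> (\<exists>G. directed_in Q (\<lambda>p q. le (d p) (d q)) G \<and> (\<forall>\<alpha>\<in>I. G \<inter> (Q \<inter> d -` D \<alpha>) \<noteq> {}))"
  proof
    assume "\<exists>G. directed_in Q (\<lambda>p q. le (d p) (d q)) G \<and> (\<forall>\<alpha>\<in>I. G \<inter> (Q \<inter> d -` D \<alpha>) \<noteq> {})"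
    then obtain G where G: "directed_in Q (\<lambda>p q. le (d p) (d q)) G" "\<forall>\<alpha>\<in>I. G \<inter> (Q \<inter> d -` D \<alpha>) \<noteq> {}"
      by blast
    have "directed_in P le (d ` G)"
      by (rule directed_in_pullback[OF surj G(1)])
    moreover have "\<forall>\<alpha>\<in>I. d ` G \<inter> D \<alpha> \<noteq> {}"
      using G(2) by blast
    ultimately show False
      using no_generic by blast
  qed
  then show ?thesis
    unfolding MA_sigma_centered_counterexample_def
    using sigma_centered_pullback[OF surj sc] open_dense_in_pullback[OF surj od] by blast
qed

lemma ex_surj_Field_onto_countable_Times:
  assumes "Card_order r" and "infinite (Field r)" and "A \<noteq> {}" and "|A| \<le>o r"
  shows "\<exists>g. g ` Field r = (UNIV :: 'c::countable set) \<times> A"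
proof -
  have "|UNIV :: 'c set| \<le>o natLeq"
    using countableI_type by (rule countable_card_le_natLeq[THEN iffD1])
  moreover have "natLeq \<le>o r"
    using assms(1,2) by (intro natLeq_ordLeq_cinfinite conjI) (simp_all add: cinfinite_def)
  ultimately have "|UNIV :: 'c set| \<le>o r"
    by (rule ordLeq_transitive)
  then have "|(UNIV :: 'c set) \<times> A| \<le>o r"
    using assms(4) by (rule card_of_Times_ordLeq_infinite_Field[OF assms(2) _ _ assms(1)])
  then have "|(UNIV :: 'c set) \<times> A| \<le>o |Field r|"
    using ordIso_symmetric[OF card_of_Field_ordIso[OF assms(1)]] by (rule ordLeq_ordIso_trans)
  moreover have "(UNIV :: 'c set) \<times> A \<noteq> {}"
    using assms(3) by simp
  ultimately show ?thesis
    by (rule card_of_ordLeq2[THEN iffD2, rotated])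
qed

section \<open>Forcing below a directed family of reals\<close>

fun stem_le :: "('i \<Rightarrow> nat \<Rightarrow> nat) \<Rightarrow> nat list \<times> 'i \<Rightarrow> nat list \<times> 'i \<Rightarrow> bool" where
  "stem_le f (s, i) (t, j) \<longleftrightarrow> prefix s t \<and>
     (\<forall>n\<in>{length s..<length t}. t ! n \<le> f i n) \<and> (\<forall>n\<ge>length t. f j n \<le> f i n)"

lemma prefix_nth: "prefix s t \<Longrightarrow> n < length s \<Longrightarrow> t ! n = s ! n"
  by (auto elim: prefixE simp: nth_append)

lemma stem_le_trans:
  assumes "stem_le f (s, i) (t, j)" and "stem_le f (t, j) (u, k)"
  shows "stem_le f (s, i) (u, k)"
proof -
  have st: "prefix s t" "\<And>n. length s \<le> n \<Longrightarrow> n < length t \<Longrightarrow> t ! n \<le> f i n"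
    "\<And>n. length t \<le> n \<Longrightarrow> f j n \<le> f i n"
    using assms(1) by auto
  have tu: "prefix t u" "\<And>n. length t \<le> n \<Longrightarrow> n < length u \<Longrightarrow> u ! n \<le> f j n"
    "\<And>n. length u \<le> n \<Longrightarrow> f k n \<le> f j n"
    using assms(2) by auto
  have "length t \<le> length u"
    using tu(1) by (rule prefix_length_le)
  have "u ! n \<le> f i n" if "length s \<le> n" "n < length u" for n
  proof (cases "n < length t")
    case True
    then have "u ! n = t ! n"
      using tu(1) by (simp add: prefix_nth)
    also have "\<dots> \<le> f i n"
      using st(2) that(1) True .
    finally show ?thesis .
  next
    case False
    then have "u ! n \<le> f j n"
      using tu(2) that(2) by simp
    also have "\<dots> \<le> f i n"
      using st(3) False by simp
    finally show ?thesis .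
  qed
  moreover have "f k n \<le> f i n" if "length u \<le> n" for n
    using st(3) tu(3) that \<open>length t \<le> length u\<close> by (meson order.trans)
  moreover have "prefix s u"
    using st(1) tu(1) by (rule prefix_order.trans)
  ultimately show ?thesis
    by simp
qed

lemma forcing_notion_stem_le: "forcing_notion Q (stem_le f)"
  unfolding forcing_notion_def by (auto intro: stem_le_trans)

lemma stem_le_extend:
  assumes "\<forall>n\<ge>L. f k n \<le> f j n" and "\<forall>n\<in>{length s..<L}. u n \<le> f j n"
  shows "stem_le f (s, j) (s @ map u [length s..<L], k)"
  using assms by (auto simp: nth_append)

definition forces_below :: "'i set \<Rightarrow> ('i \<Rightarrow> nat \<Rightarrow> nat) \<Rightarrow> 'i \<Rightarrow> (nat list \<times> 'i) set" where
  "forces_below I f i = {(t, j). j \<in> I \<and> (\<forall>n\<ge>length t. f j n \<le> f i n)}"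

definition forces_exceeds :: "'i set \<Rightarrow> (nat \<Rightarrow> nat) \<Rightarrow> nat \<Rightarrow> (nat list \<times> 'i) set" where
  "forces_exceeds I h m = {(t, j). j \<in> I \<and> (\<exists>n. m \<le> n \<and> n < length t \<and> h n < t ! n)}"

text \<open>Junk unless some stem in G reaches n; for directed G the choice is irrelevant
  (generic_real_nth).\<close>

definition generic_real :: "(nat list \<times> 'i) set \<Rightarrow> nat \<Rightarrow> nat" where
  "generic_real G n = fst (SOME p. p \<in> G \<and> n < length (fst p)) ! n"

lemma open_dense_forces_exceeds:
  assumes "\<forall>j\<in>I. ev_less h (f j)"
  shows "open_dense_in (UNIV \<times> I) (stem_le f) (forces_exceeds I h m)"
  unfolding open_dense_in_def dense_in_def
proof (intro conjI ballI impI)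
  fix p :: "nat list \<times> 'a" assume "p \<in> UNIV \<times> I"
  then obtain s j where p: "p = (s, j)" "j \<in> I"
    by blast
  obtain N where N: "\<forall>n\<ge>N. h n < f j n"
    using assms p(2) unfolding ev_less_iff_eventually eventually_sequentially by blast
  define n0 where "n0 = max m (max N (length s))"
  define t where "t = s @ map (f j) [length s..<Suc n0]"
  have "stem_le f p (t, j)"
    unfolding p t_def by (rule stem_le_extend) auto
  moreover have "(t, j) \<in> forces_exceeds I h m"
    unfolding forces_exceeds_def using N p(2)
    by (auto intro!: exI[of _ n0] simp: t_def n0_def nth_append)
  ultimately show "\<exists>q\<in>forces_exceeds I h m. stem_le f p q"
    by blast
next
  fix p q assume "p \<in> forces_exceeds I h m" "q \<in> UNIV \<times> I" "stem_le f p q"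
  then show "q \<in> forces_exceeds I h m"
    unfolding forces_exceeds_def
    by (force dest: prefix_length_le prefix_nth)
qed (auto simp: forces_exceeds_def)

lemma generic_real_nth:
  assumes "directed_in Q (stem_le f) G" and "(t, j) \<in> G" and "n < length t"
  shows "generic_real G n = t ! n"
proof -
  obtain s i where si: "(SOME p. p \<in> G \<and> n < length (fst p)) = (s, i)"
    by fastforce
  have "(s, i) \<in> G" "n < length s"
    using someI[of "\<lambda>p. p \<in> G \<and> n < length (fst p)" "(t, j)"] assms(2,3) si by auto
  then obtain u l where "stem_le f (s, i) (u, l)" "stem_le f (t, j) (u, l)"
    using assms(1,2) unfolding directed_in_def by (metis surj_pair)
  then have "u ! n = s ! n" "u ! n = t ! n"
    using \<open>n < length s\<close> assms(3) prefix_nth by auto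
  then show ?thesis
    using si unfolding generic_real_def by simp
qed

lemma generic_real_ev_le:
  assumes dir: "directed_in Q (stem_le f) G" and tj: "(t, j) \<in> G \<inter> forces_below I f i"
    and long: "\<And>n. \<exists>(s, k)\<in>G. n < length s"
  shows "ev_le (generic_real G) (f i)"
  unfolding ev_le_iff_eventually eventually_sequentially
proof (intro exI allI impI)
  fix n assume "length t \<le> n"
  obtain s k where "(s, k) \<in> G" "n < length s"
    using long by blast
  then obtain u l where ul: "(u, l) \<in> G" "stem_le f (t, j) (u, l)" "stem_le f (s, k) (u, l)"
    using dir tj unfolding directed_in_def by (metis IntD1 surj_pair)
  then have "n < length u"
    using \<open>n < length s\<close> by (auto dest: prefix_length_le)
  then have "generic_real G n \<le> f j n"
    using generic_real_nth[OF dir ul(1)] ul(2) \<open>length t \<le> n\<close> by auto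
  also have "\<dots> \<le> f i n"
    using tj \<open>length t \<le> n\<close> unfolding forces_below_def by auto
  finally show "generic_real G n \<le> f i n" .
qed

lemma generic_real_not_ev_le:
  assumes dir: "directed_in Q (stem_le f) G" and meets: "\<And>m. G \<inter> forces_exceeds I h m \<noteq> {}"
  shows "\<not> ev_le (generic_real G) h"
proof
  assume "ev_le (generic_real G) h"
  then obtain N where N: "\<forall>n\<ge>N. generic_real G n \<le> h n"
    unfolding ev_le_iff_eventually eventually_sequentially by blast
  obtain t j n where "(t, j) \<in> G" "N \<le> n" "n < length t" "h n < t ! n"
    using meets[of N] unfolding forces_exceeds_def by blast
  with N generic_real_nth[OF dir] show False
    by fastforce
qed

locale lower_directed =
  fixes I :: "'i set" and f :: "'i \<Rightarrow> nat \<Rightarrow> nat"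
  assumes nonempty: "I \<noteq> {}"
    and directed: "\<And>i j. i \<in> I \<Longrightarrow> j \<in> I \<Longrightarrow> \<exists>k\<in>I. ev_le (f k) (f i) \<and> ev_le (f k) (f j)"
begin

lemma finite_lower_bound:
  assumes "finite J" and "J \<subseteq> I"
  shows "\<exists>k\<in>I. \<forall>\<^sub>F n in sequentially. \<forall>j\<in>J. f k n \<le> f j n"
  using assms
proof (induction J rule: finite_induct)
  case empty
  then show ?case
    using nonempty by auto
next
  case (insert x J)
  then obtain k where k: "k \<in> I" "\<forall>\<^sub>F n in sequentially. \<forall>j\<in>J. f k n \<le> f j n"
    by auto
  obtain k' where "k' \<in> I" "ev_le (f k') (f k)" "ev_le (f k') (f x)"
    using directed[OF k(1), of x] insert.prems by auto
  then have "\<forall>\<^sub>F n in sequentially. f k' n \<le> f k n" "\<forall>\<^sub>F n in sequentially. f k' n \<le> f x n"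
    unfolding ev_le_iff_eventually by blast+
  then have "\<forall>\<^sub>F n in sequentially. \<forall>j\<in>insert x J. f k' n \<le> f j n"
    using k(2) by eventually_elim (metis insert_iff le_trans)
  then show ?case
    using \<open>k' \<in> I\<close> by blast
qed

lemma sigma_centered_stem_le: "sigma_centered (UNIV \<times> I) (stem_le f)"
proof (rule sigma_centeredI)
  show "UNIV \<times> I = (\<Union>s :: nat list. {s} \<times> I)"
    by blast
  show "centered (UNIV \<times> I) (stem_le f) ({s} \<times> I)" for s
    unfolding centered_def
  proof (intro conjI allI impI)
    fix F assume F: "F \<subseteq> {s} \<times> I \<and> finite F"
    then have J: "finite (snd ` F)" "snd ` F \<subseteq> I"
      by auto
    obtain k where "k \<in> I" "\<forall>\<^sub>F n in sequentially. \<forall>j\<in>snd ` F. f k n \<le> f j n"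
      using finite_lower_bound[OF J] by blast
    then obtain N where k: "k \<in> I" "\<forall>n\<ge>N. \<forall>j\<in>snd ` F. f k n \<le> f j n"
      unfolding eventually_sequentially by blast
    have "stem_le f p (s @ map (\<lambda>_. 0) [length s..<N], k)" if "p \<in> F" for p
    proof -
      have "p = (s, snd p)"
        using F that by auto
      moreover have "\<forall>n\<ge>N. f k n \<le> f (snd p) n"
        using k(2) that by blast
      ultimately show ?thesis
        using stem_le_extend[of N f k "snd p" s "\<lambda>_. 0"] by simp
    qed
    then show "\<exists>q\<in>UNIV \<times> I. \<forall>p\<in>F. stem_le f p q"
      using k(1) by blast
  qed blast
qed (rule forcing_notion_stem_le)

lemma open_dense_forces_below:
  assumes "i \<in> I"
  shows "open_dense_in (UNIV \<times> I) (stem_le f) (forces_below I f i)"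
  unfolding open_dense_in_def dense_in_def
proof (intro conjI ballI impI)
  fix p :: "nat list \<times> 'i" assume "p \<in> UNIV \<times> I"
  then obtain s j where p: "p = (s, j)" "j \<in> I"
    by blast
  obtain k N where k: "k \<in> I" "\<forall>n\<ge>N. \<forall>l\<in>{i, j}. f k n \<le> f l n"
    using finite_lower_bound[of "{i, j}"] assms p(2) unfolding eventually_sequentially by auto
  define t where "t = s @ map (f j) [length s..<N]"
  have "stem_le f p (t, k)"
    unfolding p t_def by (rule stem_le_extend) (use k(2) in auto)
  moreover have "(t, k) \<in> forces_below I f i"
    using k unfolding forces_below_def t_def by auto
  ultimately show "\<exists>q\<in>forces_below I f i. stem_le f p q"
    by blast
next
  fix p q assume "p \<in> forces_below I f i" "q \<in> UNIV \<times> I" "stem_le f p q"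
  then show "q \<in> forces_below I f i"
    unfolding forces_below_def by (auto dest!: prefix_length_le) (meson le_trans order_trans)
qed (auto simp: forces_below_def)

end

text \<open>For a peculiar cut, H is the upper half; below is clause (gamma) and cofinal is
  clause (delta).\<close>

locale lower_cone_cofinal = lower_directed +
  fixes H :: "(nat \<Rightarrow> nat) set"
  assumes below: "\<And>h i. h \<in> H \<Longrightarrow> i \<in> I \<Longrightarrow> ev_less h (f i)"
    and cofinal: "\<And>g. \<forall>i\<in>I. ev_le g (f i) \<Longrightarrow> \<exists>h\<in>H. ev_le g h"
begin

lemma MA_sigma_centered_counterexample_stem_le:
  "MA_sigma_centered_counterexample (UNIV \<times> I) (stem_le f)
     (\<lambda>(m, i, h). forces_below I f i \<inter> forces_exceeds I h m) (UNIV \<times> I \<times> H)"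
  unfolding MA_sigma_centered_counterexample_def
proof (intro conjI ballI notI)
  show "sigma_centered (UNIV \<times> I) (stem_le f)"
    by (rule sigma_centered_stem_le)
  show "open_dense_in (UNIV \<times> I) (stem_le f) ((\<lambda>(m, i, h). forces_below I f i \<inter> forces_exceeds I h m) x)"
    if "x \<in> UNIV \<times> I \<times> H" for x
  proof -
    from that obtain m i h where x: "x = (m, i, h)" and "i \<in> I" "h \<in> H"
      by auto
    then have "\<forall>j\<in>I. ev_less h (f j)"
      using below by blast
    with \<open>i \<in> I\<close>
    have "open_dense_in (UNIV \<times> I) (stem_le f) (forces_below I f i \<inter> forces_exceeds I h m)"
      by (intro open_dense_in_Int forcing_notion_stem_le open_dense_forces_below
          open_dense_forces_exceeds)
    then show ?thesis
      unfolding x by simp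
  qed
  assume "\<exists>G. directed_in (UNIV \<times> I) (stem_le f) G \<and>
    (\<forall>x\<in>UNIV \<times> I \<times> H. G \<inter> (\<lambda>(m, i, h). forces_below I f i \<inter> forces_exceeds I h m) x \<noteq> {})"
  then obtain G where dir: "directed_in (UNIV \<times> I) (stem_le f) G"
    and meets: "\<And>i h m. i \<in> I \<Longrightarrow> h \<in> H \<Longrightarrow> G \<inter> forces_below I f i \<inter> forces_exceeds I h m \<noteq> {}"
    by (auto simp: Int_assoc)
  \<comment> \<open>(delta) applied to the zero function shows that H is nonempty.\<close>
  obtain i0 h0 where "i0 \<in> I" "h0 \<in> H"
    using nonempty cofinal[of "\<lambda>_. 0"] by (auto simp: ev_le_def)
  have long: "\<exists>(s, k)\<in>G. n < length s" for n
    using meets[OF \<open>i0 \<in> I\<close> \<open>h0 \<in> H\<close>, of "Suc n"] unfolding forces_exceeds_def by fastforce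
  have "ev_le (generic_real G) (f i)" if i: "i \<in> I" for i
  proof -
    obtain t j where "(t, j) \<in> G \<inter> forces_below I f i"
      using meets[OF i \<open>h0 \<in> H\<close>, of 0] by auto
    then show ?thesis
      using generic_real_ev_le[OF dir _ long] by blast
  qed
  then obtain h where "h \<in> H" "ev_le (generic_real G) h"
    using cofinal by blast
  moreover have "G \<inter> forces_exceeds I h m \<noteq> {}" for m
    using meets[OF \<open>i0 \<in> I\<close> \<open>h \<in> H\<close>] by blast
  ultimately show False
    using generic_real_not_ev_le[OF dir] by blast
qed

end

section \<open>Graphs of reals and the pseudo-intersection number\<close>

definition hypograph :: "(nat \<Rightarrow> nat) \<Rightarrow> nat set" where
  "hypograph f = prod_encode ` {(n, k). k \<le> f n}"

definition strict_epigraph :: "(nat \<Rightarrow> nat) \<Rightarrow> nat set" where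
  "strict_epigraph f = prod_encode ` {(n, k). f n < k}"

lemma prod_encode_in_hypograph [simp]: "prod_encode (n, k) \<in> hypograph f \<longleftrightarrow> k \<le> f n"
  by (auto simp: hypograph_def prod_encode_eq)

lemma prod_encode_in_strict_epigraph [simp]: "prod_encode (n, k) \<in> strict_epigraph f \<longleftrightarrow> f n < k"
  by (auto simp: strict_epigraph_def prod_encode_eq)

context lower_cone_cofinal
begin

lemma infinite_Inter_graphs:
  assumes "F \<subseteq> (\<lambda>i. hypograph (f i)) ` I \<union> strict_epigraph ` H" and "finite F"
  shows "infinite (\<Inter>F)"
proof -
  obtain J where J: "J \<subseteq> I" "finite J" "F \<inter> (\<lambda>i. hypograph (f i)) ` I = (\<lambda>i. hypograph (f i)) ` J"
    using finite_subset_image[of "F \<inter> (\<lambda>i. hypograph (f i)) ` I" "\<lambda>i. hypograph (f i)" I] assms(2)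
    by blast
  obtain k where k: "k \<in> I" "\<forall>\<^sub>F n in sequentially. \<forall>j\<in>J. f k n \<le> f j n"
    using finite_lower_bound[OF J(2,1)] by blast
  have "\<forall>\<^sub>F n in sequentially. prod_encode (n, f k n) \<in> X" if "X \<in> F" for X
  proof -
    have "X \<in> (\<lambda>i. hypograph (f i)) ` J \<union> strict_epigraph ` H"
      using assms(1) J(3) that by blast
    then show ?thesis
    proof
      assume "X \<in> (\<lambda>i. hypograph (f i)) ` J"
      then obtain j where "j \<in> J" "X = hypograph (f j)"
        by blast
      then show ?thesis
        using k(2) by (auto elim: eventually_mono)
    next
      assume "X \<in> strict_epigraph ` H"
      then obtain h where "h \<in> H" "X = strict_epigraph h"
        by blast
      then show ?thesis
        using below[OF \<open>h \<in> H\<close> k(1)] unfolding ev_less_iff_eventually by simp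
    qed
  qed
  then have "\<forall>\<^sub>F n in sequentially. \<forall>X\<in>F. prod_encode (n, f k n) \<in> X"
    by (intro eventually_ball_finite[OF assms(2)]) blast
  then obtain N where "\<forall>n\<ge>N. \<forall>X\<in>F. prod_encode (n, f k n) \<in> X"
    unfolding eventually_sequentially by blast
  then have "(\<lambda>n. prod_encode (n, f k n)) ` {N..} \<subseteq> \<Inter>F"
    by auto
  moreover have "infinite ((\<lambda>n. prod_encode (n, f k n)) ` {N..})"
    by (simp add: finite_image_iff inj_on_def prod_encode_eq infinite_Ici)
  ultimately show ?thesis
    using finite_subset by blast
qed

lemma finite_if_almost_contained_in_graphs:
  assumes hyp: "\<forall>i\<in>I. finite (Y - hypograph (f i))" and epi: "\<forall>h\<in>H. finite (Y - strict_epigraph h)"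
  shows "finite Y"
proof -
  define column where "column n = {k. prod_encode (n, k) \<in> Y}" for n
  obtain i0 where "i0 \<in> I"
    using nonempty by blast
  have finite_column: "finite (column n)" for n
  proof -
    have "column n \<subseteq> {..f i0 n} \<union> (\<lambda>k. prod_encode (n, k)) -` (Y - hypograph (f i0))"
      unfolding column_def by auto
    moreover have "finite ((\<lambda>k. prod_encode (n, k)) -` (Y - hypograph (f i0)))"
      using hyp \<open>i0 \<in> I\<close> by (intro finite_vimageI) (auto simp: inj_on_def prod_encode_eq)
    ultimately show ?thesis
      using finite_subset by auto
  qed
  \<comment> \<open>The column tops of Y form a real below the lower half, to which (delta) applies.\<close>
  define g where "g n = Max (insert 0 (column n))" for n
  have g_in: "prod_encode (n, g n) \<in> Y" if "g n \<noteq> 0" for n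
    using Max_in[of "insert 0 (column n)"] finite_column that unfolding g_def column_def by auto
  have g_ge: "k \<le> g n" if "prod_encode (n, k) \<in> Y" for n k
    using finite_column that unfolding g_def column_def by simp
  have "ev_le g (f i)" if "i \<in> I" for i
  proof -
    have "{n. \<not> g n \<le> f i n} \<subseteq> (\<lambda>x. fst (prod_decode x)) ` (Y - hypograph (f i))"
    proof
      fix n assume "n \<in> {n. \<not> g n \<le> f i n}"
      then have "prod_encode (n, g n) \<in> Y - hypograph (f i)"
        using g_in by auto
      then show "n \<in> (\<lambda>x. fst (prod_decode x)) ` (Y - hypograph (f i))"
        by (metis fst_conv image_eqI prod_encode_inverse)
    qed
    then show ?thesis
      unfolding ev_le_def using hyp that finite_subset by blast
  qed
  then obtain h where "h \<in> H" "ev_le g h"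
    using cofinal by blast
  have "Y \<subseteq> prod_encode ` Sigma {n. \<not> g n \<le> h n} column \<union> (Y - strict_epigraph h)"
  proof
    fix x assume "x \<in> Y"
    obtain n k where x: "x = prod_encode (n, k)"
      by (metis prod_decode_inverse surj_pair)
    show "x \<in> prod_encode ` Sigma {n. \<not> g n \<le> h n} column \<union> (Y - strict_epigraph h)"
    proof (cases "h n < k")
      case True
      then have "\<not> g n \<le> h n" "k \<in> column n"
        using g_ge[of n k] \<open>x \<in> Y\<close> x unfolding column_def by auto
      then show ?thesis
        using x by blast
    next
      case False
      then show ?thesis
        using \<open>x \<in> Y\<close> x by simp
    qed
  qed
  moreover have "finite (prod_encode ` Sigma {n. \<not> g n \<le> h n} column)"
    using \<open>ev_le g h\<close> finite_column unfolding ev_le_def by auto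
  ultimately show ?thesis
    using epi \<open>h \<in> H\<close> finite_subset by blast
qed

lemma p_family_graphs: "p_family ((\<lambda>i. hypograph (f i)) ` I \<union> strict_epigraph ` H)"
  (is "p_family ?B")
  unfolding p_family_def
proof (intro conjI)
  show "\<forall>X\<in>?B. infinite X"
  proof
    fix X assume "X \<in> ?B"
    then show "infinite X"
      using infinite_Inter_graphs[of "{X}"] by simp
  qed
  show "\<forall>F. F \<subseteq> ?B \<and> finite F \<longrightarrow> infinite (\<Inter>F)"
    using infinite_Inter_graphs by blast
  show "\<not> (\<exists>A. infinite A \<and> (\<forall>X\<in>?B. finite (A - X)))"
  proof
    assume "\<exists>A. infinite A \<and> (\<forall>X\<in>?B. finite (A - X))"
    then obtain A where "infinite A" "\<forall>X\<in>?B. finite (A - X)"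
      by blast
    then have "\<forall>i\<in>I. finite (A - hypograph (f i))" "\<forall>h\<in>H. finite (A - strict_epigraph h)"
      by simp_all
    then show False
      using finite_if_almost_contained_in_graphs \<open>infinite A\<close> by blast
  qed
qed

end

section \<open>Peculiar cuts\<close>

lemma lower_cone_cofinal_peculiar_cut:
  assumes "Card_order r1" and "Field r1 \<noteq> {}" and cut: "peculiar_cut r1 r2 fl fu"
  shows "lower_cone_cofinal (Field r1) fl (fu ` Field r2)"
proof unfold_locales
  have le: "ev_le (fl j) (fl i)" if "(i, j) \<in> r1" "i \<in> Field r1" "j \<in> Field r1" for i j
  proof (cases "i = j")
    case False
    then show ?thesis
      using cut that ev_less_imp_ev_le unfolding peculiar_cut_def by blast
  qed (simp add: ev_le_refl)
  show "\<exists>k\<in>Field r1. ev_le (fl k) (fl i) \<and> ev_le (fl k) (fl j)"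
    if "i \<in> Field r1" "j \<in> Field r1" for i j
  proof -
    have "(i, j) \<in> r1 \<or> (j, i) \<in> r1"
      using wo_rel.TOTALS[OF Card_order_wo_rel[OF assms(1)]] that by blast
    then show ?thesis
      using le[OF _ that] le[OF _ that(2,1)] that ev_le_refl by blast
  qed
  show "ev_less h (fl i)" if "h \<in> fu ` Field r2" "i \<in> Field r1" for h i
    using cut that unfolding peculiar_cut_def by blast
  show "\<exists>h\<in>fu ` Field r2. ev_le g h" if "\<forall>i\<in>Field r1. ev_le g (fl i)" for g
    using cut that unfolding peculiar_cut_def by blast
qed (rule assms(2))

context
  fixes r1 :: "'a rel" and r2 :: "'b rel" and fl fu
  assumes r1: "Card_order r1" "infinite (Field r1)" and r2: "Card_order r2" "infinite (Field r2)"
    and r1_r2: "r1 \<le>o r2" and cut: "peculiar_cut r1 r2 fl fu"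
begin

lemma lower_cone_cofinal_cut: "lower_cone_cofinal (Field r1) fl (fu ` Field r2)"
  using r1(2) by (intro lower_cone_cofinal_peculiar_cut[OF r1(1) _ cut]) auto

lemma Field_r1_ordLeq: "|Field r1| \<le>o r2"
  using card_of_Field_ordIso[OF r1(1)] r1_r2 by (rule ordIso_ordLeq_trans)

lemma upper_half_ordLeq: "|fu ` Field r2| \<le>o r2"
  using card_of_image card_of_Field_ordIso[OF r2(1)] by (rule ordLeq_ordIso_trans)

lemma MA_sigma_centered_counterexample_peculiar_cut:
  "\<exists>le D. MA_sigma_centered_counterexample (Field r1) le D (Field r2)"
proof -
  interpret lower_cone_cofinal "Field r1" fl "fu ` Field r2"
    by (rule lower_cone_cofinal_cut)
  have "|Field r1| \<le>o r1"
    using card_of_Field_ordIso[OF r1(1)] by (rule ordIso_imp_ordLeq)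
  with nonempty have "\<exists>d. d ` Field r1 = (UNIV :: nat list set) \<times> Field r1"
    by (intro ex_surj_Field_onto_countable_Times r1)
  then obtain d where d: "d ` Field r1 = (UNIV :: nat list set) \<times> Field r1"
    by blast
  have "Field r1 \<times> fu ` Field r2 \<noteq> {}"
    using nonempty r2(2) by auto
  moreover have "|Field r1 \<times> fu ` Field r2| \<le>o r2"
    using Field_r1_ordLeq upper_half_ordLeq
    by (rule card_of_Times_ordLeq_infinite_Field[OF r2(2) _ _ r2(1)])
  ultimately have "\<exists>\<rho>. \<rho> ` Field r2 = (UNIV :: nat set) \<times> Field r1 \<times> fu ` Field r2"
    by (rule ex_surj_Field_onto_countable_Times[OF r2])
  then obtain \<rho> where \<rho>: "\<rho> ` Field r2 = (UNIV :: nat set) \<times> Field r1 \<times> fu ` Field r2"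
    by blast
  show ?thesis
    using MA_sigma_centered_counterexample_pullback[OF d
        MA_sigma_centered_counterexample_reindex[OF \<rho> MA_sigma_centered_counterexample_stem_le]]
    by blast
qed

lemma p_family_peculiar_cut: "\<exists>B. p_family B \<and> |B| \<le>o r2"
proof -
  interpret lower_cone_cofinal "Field r1" fl "fu ` Field r2"
    by (rule lower_cone_cofinal_cut)
  have "|(\<lambda>i. hypograph (fl i)) ` Field r1| \<le>o r2"
    using card_of_image Field_r1_ordLeq by (rule ordLeq_transitive)
  moreover have "|strict_epigraph ` fu ` Field r2| \<le>o r2"
    using card_of_image upper_half_ordLeq by (rule ordLeq_transitive)
  ultimately have "|(\<lambda>i. hypograph (fl i)) ` Field r1 \<union> strict_epigraph ` fu ` Field r2| \<le>o r2"
    by (rule card_of_Un_ordLeq_infinite_Field[OF r2(2) _ _ r2(1)])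
  then show ?thesis
    using p_family_graphs by blast
qed

end

theorem proposition3p1:
  fixes r1 :: "'a rel" and r2 :: "'b rel"
  assumes "inf_regular_card r1" and "inf_regular_card r2"
    and "(r1, r2) \<in> ordLeq"
    and "\<exists>fl fu. peculiar_cut r1 r2 fl fu"
  shows "(\<exists>(Q :: 'a set) le (D :: 'b \<Rightarrow> 'a set).
            sigma_centered Q le \<and> (card_of Q, r1) \<in> ordIso \<and>
            (\<forall>\<alpha>\<in>Field r2. open_dense_in Q le (D \<alpha>)) \<and>
            \<not> (\<exists>G. directed_in Q le G \<and> (\<forall>\<alpha>\<in>Field r2. G \<inter> D \<alpha> \<noteq> {})))
       \<and> \<not> MA_sigma_centered r2 TYPE('a)
       \<and> (\<exists>B. p_family B \<and> (card_of B, r2) \<in> ordLeq)"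
proof -
  obtain fl fu where cut: "peculiar_cut r1 r2 fl fu"
    using assms(4) by blast
  have r1: "Card_order r1" "infinite (Field r1)" and r2: "Card_order r2" "infinite (Field r2)"
    using assms(1,2) unfolding inf_regular_card_def by auto
  obtain le D where cex: "MA_sigma_centered_counterexample (Field r1) le D (Field r2)"
    using MA_sigma_centered_counterexample_peculiar_cut[OF r1 r2 assms(3) cut] by blast
  have "|Field r1| =o r1"
    using r1(1) by (rule card_of_Field_ordIso)
  moreover have "\<not> MA_sigma_centered r2 TYPE('a)"
    using cex by (rule not_MA_sigma_centered)
  moreover have "\<exists>B. p_family B \<and> |B| \<le>o r2"
    by (rule p_family_peculiar_cut[OF r1 r2 assms(3) cut])
  ultimately show ?thesis
    using cex unfolding MA_sigma_centered_counterexample_def by blast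
qed

end
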